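(* Let $q \ge 2$, $n$, $a$, $b$ be nonnegative integers with $b \ge 1$ and $a + qb \le n - 1$. Then $\kappa^*(A_{q,n,a,b}) \le \kappa^*(A_{q,n,a+2,b-1})$.
   Context: For integers $q \ge 2$, $n \ge 1$, $0 \le a \le n$, $b \ge 0$, the $q$-ary $n$-symbol $a$-erasure $b$-substitution channel $A_{q,n,a,b}$ has input set $[q]^n$ (where $[q]=\{0,\dots,q-1\}$) and output set the strings $y \in ([q]\cup\{*\})^n$ having exactly $a$ positions equal to the erasure symbol $*$; $(A_{q,n,a,b})_{x,y} = 1$ iff $|\{i : y_i \ne *,\ y_i \ne x_i\}| \le b$. For a $0/1$ matrix $A \in \{0,1\}^{X\times Y}$, $\kappa^*(A) = \min\{\mathbf{1}^T z : z\in \mathbb{R}^Y,\ z\ge\mathbf{0},\ Az\ge\mathbf{1}\}$. *)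

theory Defs
  imports Complex_Main
begin

definition kappa_star :: "'x set \<Rightarrow> 'y set \<Rightarrow> ('x \<Rightarrow> 'y \<Rightarrow> bool) \<Rightarrow> real" where
  "kappa_star X Y A = Inf {(\<Sum>y\<in>Y. z y) | z :: 'y \<Rightarrow> real.
      (\<forall>y\<in>Y. z y \<ge> 0) \<and> (\<forall>x\<in>X. (\<Sum>y\<in>Y. if A x y then z y else 0) \<ge> 1)}"

definition chan_inputs :: "nat \<Rightarrow> nat \<Rightarrow> nat list set" where
  "chan_inputs q n = {x. length x = n \<and> (\<forall>i<n. x ! i < q)}"

text \<open>Outputs: words in ([q] \<union> {*})^n with exactly a erasures; the erasure symbol * is None.\<close>
definition chan_outputs :: "nat \<Rightarrow> nat \<Rightarrow> nat \<Rightarrow> nat option list set" where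
  "chan_outputs q n a = {y. length y = n \<and> (\<forall>i<n. \<forall>v. y ! i = Some v \<longrightarrow> v < q)
      \<and> card {i. i < n \<and> y ! i = None} = a}"

definition chan_entry :: "nat \<Rightarrow> nat \<Rightarrow> nat list \<Rightarrow> nat option list \<Rightarrow> bool" where
  "chan_entry n b x y = (card {i. i < n \<and> y ! i \<noteq> None \<and> y ! i \<noteq> Some (x ! i)} \<le> b)"

definition kappa_chan :: "nat \<Rightarrow> nat \<Rightarrow> nat \<Rightarrow> nat \<Rightarrow> real" where
  "kappa_chan q n a b = kappa_star (chan_inputs q n) (chan_outputs q n a) (chan_entry n b)"

end

theory Submission
  imports Defs "HOL-Library.FuncSet"
begin

text \<open>Every column of the channel matrix with e erasures and k substitutions contains the same
  number q^e V of ones, where V = V_q(n - e, k) is the volume of a Hamming ball of radius k in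
  [q]^(n - e); double counting therefore bounds every fractional cover from below by q^(n - e) / V.
  The bound is attained by the uniform weight on the outputs erasing exactly the first e positions,
  since every input is adjacent to exactly V of them. Hence kappa^*(A_{q,n,e,k}) = q^(n - e) / V, and
  with m = n - a - 2 the claim becomes q^2 V_q(m, b - 1) <= V_q(m + 2, b). Two applications of
  Pascal's rule reduce this to (q - 1) C(m, b - 1) <= C(m, b), which is where q b <= m + 1 enters.\<close>

definition fractional_cover :: "'x set \<Rightarrow> 'y set \<Rightarrow> ('x \<Rightarrow> 'y \<Rightarrow> bool) \<Rightarrow> ('y \<Rightarrow> real) \<Rightarrow> bool" where
  "fractional_cover X Y A z \<longleftrightarrow>
     (\<forall>y\<in>Y. 0 \<le> z y) \<and> (\<forall>x\<in>X. 1 \<le> (\<Sum>y\<in>Y. if A x y then z y else 0))"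

lemma kappa_star_eqI:
  assumes "fractional_cover X Y A z" and "sum z Y = v"
    and "\<And>z. fractional_cover X Y A z \<Longrightarrow> v \<le> sum z Y"
  shows "kappa_star X Y A = v"
proof -
  have "kappa_star X Y A = Inf {sum z Y | z. fractional_cover X Y A z}"
    by (simp add: kappa_star_def fractional_cover_def)
  also have "\<dots> = v"
    using assms by (intro cInf_eq_minimum) auto
  finally show ?thesis .
qed

lemma fractional_cover_column_regular:
  assumes "finite X" "finite Y" and "\<forall>y\<in>Y. card {x\<in>X. A x y} = C"
    and "fractional_cover X Y A z"
  shows "real (card X) \<le> real C * sum z Y"
proof -
  have "real (card X) = (\<Sum>x\<in>X. 1)"
    by simp
  also have "\<dots> \<le> (\<Sum>x\<in>X. \<Sum>y\<in>Y. if A x y then z y else 0)"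
    using assms(4) by (intro sum_mono) (simp add: fractional_cover_def)
  also have "\<dots> = (\<Sum>y\<in>Y. \<Sum>x\<in>X. if A x y then z y else 0)"
    by (rule sum.swap)
  also have "\<dots> = (\<Sum>y\<in>Y. real (card {x\<in>X. A x y}) * z y)"
    using assms(1) by (simp add: sum.inter_filter[symmetric])
  also have "\<dots> = real C * sum z Y"
    using assms(3) by (simp add: sum_distrib_left mult.commute)
  finally show ?thesis .
qed

lemma fractional_cover_uniform:
  assumes "finite Y" "F \<subseteq> Y" "0 < R" and "\<forall>x\<in>X. R \<le> card {y\<in>F. A x y}"
  shows "fractional_cover X Y A (\<lambda>y. if y \<in> F then 1 / real R else 0)"
proof -
  have "1 \<le> (\<Sum>y\<in>Y. if A x y then (if y \<in> F then 1 / real R else 0) else 0)" if "x \<in> X" for x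
  proof -
    have filter_eq: "{y\<in>Y. y \<in> F \<and> A x y} = {y\<in>F. A x y}"
      using assms(2) by auto
    have "(\<Sum>y\<in>Y. if A x y then (if y \<in> F then 1 / real R else 0) else 0)
        = (\<Sum>y\<in>{y\<in>Y. y \<in> F \<and> A x y}. 1 / real R)"
      unfolding sum.inter_filter[OF assms(1)] by (intro sum.cong) auto
    also have "\<dots> = real (card {y\<in>F. A x y}) / real R"
      by (simp add: filter_eq)
    finally show ?thesis
      using assms(3,4) that by simp
  qed
  then show ?thesis by (simp add: fractional_cover_def)
qed

lemma card_lists_nth_in:
  "card {xs. length xs = n \<and> (\<forall>i<n. xs ! i \<in> F i)} = (\<Prod>i<n. card (F i))"
proof -
  let ?L = "{xs. length xs = n \<and> (\<forall>i<n. xs ! i \<in> F i)}"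
  have "bij_betw (\<lambda>xs. restrict (\<lambda>i. xs ! i) {..<n}) ?L (PiE {..<n} F)"
  proof (rule bij_betwI')
    fix xs ys assume "xs \<in> ?L" "ys \<in> ?L"
    then show "(restrict ((!) xs) {..<n} = restrict ((!) ys) {..<n}) = (xs = ys)"
      by (auto simp: restrict_def fun_eq_iff intro: nth_equalityI)
  next
    fix f assume f: "f \<in> PiE {..<n} F"
    show "\<exists>xs\<in>?L. f = restrict ((!) xs) {..<n}"
      by (rule bexI[of _ "map f [0..<n]"]) (use f in \<open>auto simp: fun_eq_iff PiE_def extensional_def\<close>)
  qed auto
  then have "card ?L = card (PiE {..<n} F)"
    by (rule bij_betw_same_card)
  then show ?thesis by (simp add: card_PiE)
qed

lemma sum_subsets_card_le:
  assumes "finite N"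
  shows "(\<Sum>D\<in>{D. D \<subseteq> N \<and> card D \<le> k}. h (card D)) = (\<Sum>j\<le>k. (card N choose j) * h j)"
proof -
  have split: "{D. D \<subseteq> N \<and> card D \<le> k} = (\<Union>j\<le>k. {D. D \<subseteq> N \<and> card D = j})"
    by auto
  have "\<And>j. finite {D. D \<subseteq> N \<and> card D = j}"
    using assms by (auto intro: finite_subset[of _ "Pow N"])
  then have "(\<Sum>D\<in>{D. D \<subseteq> N \<and> card D \<le> k}. h (card D))
      = (\<Sum>j\<le>k. \<Sum>D\<in>{D. D \<subseteq> N \<and> card D = j}. h (card D))"
    unfolding split by (intro sum.UNION_disjoint) auto
  also have "\<dots> = (\<Sum>j\<le>k. (card N choose j) * h j)"
    by (intro sum.cong) (simp_all add: n_subsets[OF assms])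
  finally show ?thesis .
qed

definition hamming_volume :: "nat \<Rightarrow> nat \<Rightarrow> nat \<Rightarrow> nat" where
  "hamming_volume q m k = (\<Sum>j\<le>k. (m choose j) * (q - 1) ^ j)"

lemma hamming_volume_pos: "0 < hamming_volume q m k"
proof -
  have "hamming_volume q m 0 \<le> hamming_volume q m k"
    unfolding hamming_volume_def by (intro sum_mono2) auto
  then show ?thesis by (simp add: hamming_volume_def)
qed

lemma hamming_volume_Suc:
  "hamming_volume q m (Suc k) = hamming_volume q m k + (m choose Suc k) * (q - 1) ^ Suc k"
  by (simp add: hamming_volume_def)

lemma hamming_volume_Suc_Suc:
  "hamming_volume q (Suc m) (Suc k) = hamming_volume q m (Suc k) + (q - 1) * hamming_volume q m k"
proof (induction k)
  case 0
  then show ?case by (simp add: hamming_volume_def)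
next
  case (Suc k)
  then show ?case
    by (simp add: hamming_volume_Suc[of q "Suc m"] hamming_volume_Suc[of q m]
        add_mult_distrib distrib_left mult.assoc mult.left_commute)
qed

lemma hamming_volume_Suc_left:
  assumes "0 < q"
  shows "hamming_volume q (Suc m) k + (q - 1) * ((m choose k) * (q - 1) ^ k) = q * hamming_volume q m k"
proof -
  obtain p where q: "q = Suc p"
    using assms by (cases q) auto
  show ?thesis
  proof (cases k)
    case 0
    then show ?thesis by (simp add: hamming_volume_def q)
  next
    case (Suc d)
    then show ?thesis
      using hamming_volume_Suc_Suc[of q m d] hamming_volume_Suc[of q m d]
      by (simp add: q algebra_simps)
  qed
qed

lemma mult_binomial_le_binomial_Suc:
  assumes "p * Suc c \<le> m - c"
  shows "p * (m choose c) \<le> m choose Suc c"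
proof -
  have "Suc c * (p * (m choose c)) = (p * Suc c) * (m choose c)"
    by (simp only: ac_simps)
  also have "\<dots> \<le> (m - c) * (m choose c)"
    using assms by (rule mult_le_mono1)
  also have "\<dots> = Suc c * (m choose Suc c)"
    by (metis binomial_absorb_comp binomial_absorption)
  finally show ?thesis
    by (simp only: Suc_mult_le_cancel1)
qed

lemma hamming_volume_shift_le:
  assumes "0 < q" and "q * Suc c \<le> Suc m"
  shows "q\<^sup>2 * hamming_volume q m c \<le> hamming_volume q (Suc (Suc m)) (Suc c)"
proof -
  obtain p where q: "q = Suc p"
    using assms(1) by (cases q) auto
  define V where "V = hamming_volume q m c"
  define W where "W = hamming_volume q (Suc m) c"
  define s where "s = (m choose c) * p ^ c"
  define s' where "s' = (m choose Suc c) * p ^ Suc c"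
  have "p * Suc c \<le> m - c"
    using assms(2) by (simp add: q)
  then have "p * (p * s) \<le> s'"
    using mult_le_mono1[OF mult_binomial_le_binomial_Suc, of p c m "p ^ Suc c"]
    by (simp add: s_def s'_def algebra_simps)
  moreover have "hamming_volume q (Suc (Suc m)) (Suc c) = V + s' + p * V + p * W"
    using hamming_volume_Suc_Suc[of q "Suc m" c] hamming_volume_Suc_Suc[of q m c]
      hamming_volume_Suc[of q m c]
    by (simp add: q V_def W_def s'_def)
  moreover have "W + p * s = q * V"
    using hamming_volume_Suc_left[OF assms(1), of m c] by (simp add: q W_def V_def s_def)
  then have "p * W + p * (p * s) = p * V + p * (p * V)"
    by (metis add_mult_distrib2 mult_Suc q)
  \<comment> \<open>after the two Pascal steps the two sides differ by exactly \<open>s' - p\<^sup>2 s\<close>\<close>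
  ultimately have "q\<^sup>2 * V \<le> hamming_volume q (Suc (Suc m)) (Suc c)"
    by (simp add: q power2_eq_square algebra_simps)
  then show ?thesis
    by (simp add: V_def)
qed

lemma finite_chan_inputs: "finite (chan_inputs q n)"
  by (rule finite_subset[OF _ finite_lists_length_eq[of "{..<q}" n]])
    (auto simp: chan_inputs_def in_set_conv_nth)

lemma card_chan_inputs: "card (chan_inputs q n) = q ^ n"
  using card_lists_nth_in[of n "\<lambda>_. {..<q}"] by (simp add: chan_inputs_def)

lemma card_hamming_ball:
  assumes N: "N \<subseteq> {..<n}" and g: "\<forall>i\<in>N. g i < q"
  shows "card {xs \<in> chan_inputs q n. card {i\<in>N. xs ! i \<noteq> g i} \<le> k}
     = q ^ (n - card N) * hamming_volume q (card N) k"
proof -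
  have finN: "finite N" using N finite_subset by blast
  define Ds where "Ds = {D. D \<subseteq> N \<and> card D \<le> k}"
  define fib where "fib D = {xs \<in> chan_inputs q n. {i\<in>N. xs ! i \<noteq> g i} = D}" for D
  have card_fib: "card (fib D) = q ^ (n - card N) * (q - 1) ^ card D" if D: "D \<subseteq> N" for D
  proof -
    define F where "F i = (if i \<in> D then {..<q} - {g i} else if i \<in> N then {g i} else {..<q})" for i
    have "fib D = {xs. length xs = n \<and> (\<forall>i<n. xs ! i \<in> F i)}"
      using D N g by (auto simp: fib_def chan_inputs_def F_def split: if_splits)
    then have "card (fib D) = (\<Prod>i<n. card (F i))"
      by (simp add: card_lists_nth_in)
    also have "\<dots> = (\<Prod>i<n. if i \<in> D then q - 1 else if i \<in> N then 1 else q)"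
      using g D by (intro prod.cong) (auto simp: F_def)
    also have "\<dots> = (\<Prod>i\<in>D. q - 1) * (\<Prod>i\<in>{..<n} - N. q)"
    proof -
      have "{..<n} \<inter> D = D" "({..<n} - D) - N = {..<n} - N" using D N by auto
      then show ?thesis by (simp add: prod.If_cases Diff_eq Int_assoc)
    qed
    finally show ?thesis
      using finN D N by (simp add: card_Diff_subset)
  qed
  have "{xs \<in> chan_inputs q n. card {i\<in>N. xs ! i \<noteq> g i} \<le> k} = (\<Union>D\<in>Ds. fib D)"
    by (auto simp: Ds_def fib_def)
  then have "card {xs \<in> chan_inputs q n. card {i\<in>N. xs ! i \<noteq> g i} \<le> k} = (\<Sum>D\<in>Ds. card (fib D))"
    using finN finite_chan_inputs
    by (simp, intro card_UN_disjoint) (auto simp: Ds_def fib_def intro: finite_subset[of _ "Pow N"])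
  also have "\<dots> = (\<Sum>D\<in>Ds. q ^ (n - card N) * (q - 1) ^ card D)"
    by (intro sum.cong) (auto simp: Ds_def card_fib)
  also have "\<dots> = q ^ (n - card N) * hamming_volume q (card N) k"
    using sum_subsets_card_le[OF finN, where k = k and h = "\<lambda>j. (q - 1) ^ j"]
    by (simp add: Ds_def hamming_volume_def flip: sum_distrib_left)
  finally show ?thesis .
qed

lemma finite_chan_outputs: "finite (chan_outputs q n e)"
proof (rule finite_subset[OF _ finite_lists_length_eq[of "insert None (Some ` {..<q})" n]])
  show "chan_outputs q n e \<subseteq> {ys. set ys \<subseteq> insert None (Some ` {..<q}) \<and> length ys = n}"
  proof safe
    fix y v assume "y \<in> chan_outputs q n e" "v \<in> set y" "v \<notin> Some ` {..<q}"
    then show "v = None"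
      by (cases v) (auto simp: chan_outputs_def in_set_conv_nth)
  qed (simp add: chan_outputs_def)
qed auto

lemma card_chan_column:
  assumes y: "y \<in> chan_outputs q n e"
  shows "card {x \<in> chan_inputs q n. chan_entry n k x y} = q ^ e * hamming_volume q (n - e) k"
proof -
  define N where "N = {i. i < n \<and> y ! i \<noteq> None}"
  define g where "g i = the (y ! i)" for i
  have N: "N \<subseteq> {..<n}"
    by (auto simp: N_def)
  have "card N + e = n"
  proof -
    have "card (N \<union> {i. i < n \<and> y ! i = None}) = card N + card {i. i < n \<and> y ! i = None}"
      by (rule card_Un_disjoint) (auto simp: N_def)
    moreover have "N \<union> {i. i < n \<and> y ! i = None} = {..<n}"
      by (auto simp: N_def)
    ultimately show ?thesis
      using y by (simp add: chan_outputs_def)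
  qed
  then have "card N = n - e" "n - card N = e"
    by linarith+
  moreover have "\<forall>i\<in>N. g i < q"
    using y by (auto simp: N_def g_def chan_outputs_def)
  moreover have "{x \<in> chan_inputs q n. chan_entry n k x y}
      = {xs \<in> chan_inputs q n. card {i\<in>N. xs ! i \<noteq> g i} \<le> k}"
  proof -
    have "{i. i < n \<and> y ! i \<noteq> None \<and> y ! i \<noteq> Some (x ! i)} = {i\<in>N. x ! i \<noteq> g i}" for x
      by (auto simp: N_def g_def)
    then show ?thesis by (simp add: chan_entry_def)
  qed
  ultimately show ?thesis
    using card_hamming_ball[OF N, of g q k] by simp
qed

definition erase_prefix :: "nat \<Rightarrow> nat list \<Rightarrow> nat option list" where
  "erase_prefix e w = replicate e None @ map Some w"

lemma nth_erase_prefix: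
  "i < e + length w \<Longrightarrow> erase_prefix e w ! i = (if i < e then None else Some (w ! (i - e)))"
  by (simp add: erase_prefix_def nth_append)

lemma length_erase_prefix [simp]: "length (erase_prefix e w) = e + length w"
  by (simp add: erase_prefix_def)

lemma inj_erase_prefix: "inj (erase_prefix e)"
  by (rule injI) (simp add: erase_prefix_def)

lemma erase_prefix_in_chan_outputs:
  assumes "e \<le> n" and w: "w \<in> chan_inputs q (n - e)"
  shows "erase_prefix e w \<in> chan_outputs q n e"
proof -
  have len: "length w = n - e" and "\<forall>j < n - e. w ! j < q"
    using w by (simp_all add: chan_inputs_def)
  moreover have "{i. i < n \<and> erase_prefix e w ! i = None} = {..<e}"
    using assms(1) len by (auto simp: nth_erase_prefix split: if_splits)
  ultimately show ?thesis
    using assms(1) by (auto simp: chan_outputs_def nth_erase_prefix split: if_splits)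
qed

lemma chan_entry_erase_prefix:
  assumes "e \<le> n" and "length w = n - e"
  shows "chan_entry n k x (erase_prefix e w) \<longleftrightarrow> card {j\<in>{..<n - e}. w ! j \<noteq> x ! (e + j)} \<le> k"
proof -
  have "{i. i < n \<and> erase_prefix e w ! i \<noteq> None \<and> erase_prefix e w ! i \<noteq> Some (x ! i)}
      = (+) e ` {j\<in>{..<n - e}. w ! j \<noteq> x ! (e + j)}"
  proof -
    have shift: "i \<in> (+) e ` S \<longleftrightarrow> e \<le> i \<and> i - e \<in> S" for i and S :: "nat set"
      by (auto intro: image_eqI[of _ _ "i - e"])
    show ?thesis
      using assms by (auto simp: shift nth_erase_prefix split: if_splits)
  qed
  then show ?thesis
    by (simp add: chan_entry_def card_image)
qed

lemma kappa_chan_eq: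
  assumes "0 < q" and "e \<le> n"
  shows "kappa_chan q n e k = real (q ^ (n - e)) / real (hamming_volume q (n - e) k)"
proof -
  let ?X = "chan_inputs q n" and ?Y = "chan_outputs q n e" and ?A = "chan_entry n k"
  define V where "V = hamming_volume q (n - e) k"
  define F where "F = erase_prefix e ` chan_inputs q (n - e)"
  define z where "z y = (if y \<in> F then 1 / real V else 0)" for y
  have V: "0 < V"
    by (simp add: V_def hamming_volume_pos)
  have FY: "F \<subseteq> ?Y"
    using assms(2) by (auto simp: F_def erase_prefix_in_chan_outputs)
  have inj: "inj_on (erase_prefix e) W" for W
    using inj_erase_prefix by (rule inj_on_subset) simp
  have rows: "\<forall>x\<in>?X. V \<le> card {y\<in>F. ?A x y}"
  proof
    fix x assume x: "x \<in> ?X"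
    have "{y\<in>F. ?A x y} = erase_prefix e `
        {w \<in> chan_inputs q (n - e). card {j\<in>{..<n - e}. w ! j \<noteq> x ! (e + j)} \<le> k}"
      using assms(2) by (auto simp: F_def chan_entry_erase_prefix chan_inputs_def)
    moreover have "\<forall>j\<in>{..<n - e}. x ! (e + j) < q"
      using x by (simp add: chan_inputs_def)
    ultimately show "V \<le> card {y\<in>F. ?A x y}"
      using card_hamming_ball[of "{..<n - e}" "n - e" "\<lambda>j. x ! (e + j)" q k]
      by (simp add: card_image[OF inj] V_def)
  qed
  have cover: "fractional_cover ?X ?Y ?A z"
    unfolding z_def by (rule fractional_cover_uniform[OF finite_chan_outputs FY V rows])
  have "sum z ?Y = sum z F"
    by (rule sum.mono_neutral_right[OF finite_chan_outputs FY]) (simp add: z_def)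
  also have "\<dots> = (\<Sum>y\<in>F. 1 / real V)"
    by (intro sum.cong) (simp_all add: z_def)
  also have "\<dots> = real (card F) / real V"
    by simp
  also have "card F = q ^ (n - e)"
    by (simp add: F_def card_image[OF inj] card_chan_inputs)
  finally have sum_z: "sum z ?Y = real (q ^ (n - e)) / real V" .
  have lower: "real (q ^ (n - e)) / real V \<le> sum z' ?Y" if "fractional_cover ?X ?Y ?A z'" for z'
  proof -
    have "real (q ^ e) * real (q ^ (n - e)) = real (card ?X)"
      using assms(2) by (simp add: card_chan_inputs flip: power_add)
    also have "\<dots> \<le> real (q ^ e * V) * sum z' ?Y"
      using card_chan_column[of _ q n e k]
      by (intro fractional_cover_column_regular[OF finite_chan_inputs finite_chan_outputs _ that])
        (simp add: V_def)
    finally have "real (q ^ (n - e)) \<le> real V * sum z' ?Y"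
      using assms(1) by (simp add: mult.assoc)
    then show ?thesis
      using V by (simp add: divide_le_eq mult.commute)
  qed
  show ?thesis
    unfolding kappa_chan_def V_def[symmetric] using cover sum_z lower by (rule kappa_star_eqI)
qed

theorem lemma6:
  fixes q n a b :: nat
  assumes "q \<ge> 2" and "b \<ge> 1" and "a + q * b + 1 \<le> n"
  shows "kappa_chan q n a b \<le> kappa_chan q n (a + 2) (b - 1)"
proof -
  obtain c where b: "b = Suc c"
    using assms(2) by (cases b) auto
  define m where "m = n - (a + 2)"
  have "2 \<le> q * b"
    using mult_le_mono[OF assms(1,2)] by simp
  then have n: "a + 2 \<le> n" "n - a = Suc (Suc m)" "q * Suc c \<le> Suc m"
    using assms(3) by (simp_all add: m_def b)
  define V where "V = hamming_volume q m c"
  define V' where "V' = hamming_volume q (Suc (Suc m)) (Suc c)"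
  have "q\<^sup>2 * V \<le> V'"
    unfolding V_def V'_def using assms(1) n(3) by (intro hamming_volume_shift_le) auto
  then have "q ^ Suc (Suc m) * V \<le> q ^ m * V'"
    using mult_le_mono2[of "q\<^sup>2 * V" V' "q ^ m"] by (simp add: power2_eq_square ac_simps)
  then have "real (q ^ Suc (Suc m)) * real V \<le> real (q ^ m) * real V'"
    by (metis of_nat_le_iff of_nat_mult)
  then have "real (q ^ Suc (Suc m)) / real V' \<le> real (q ^ m) / real V"
    using hamming_volume_pos[of q] by (simp add: V_def V'_def field_simps)
  then show ?thesis
    using assms(1) n by (simp add: kappa_chan_eq b m_def V_def V'_def)
qed

end
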